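(* Let $D$ be a division ring, $A$ a finitely generated free abelian group, $D * A$ a crossed product, and $M$ a nonzero finitely generated $D * A$-module with $\mathrm{gk}(M)\ge 1$. Let $C<A$ be an infinite cyclic subgroup such that $M$ is $D * C$-torsion, and let $V$ be a carrier space of $\Delta^*(M)$. Then $V^\circ\cap C\neq\langle 1\rangle$.
   Context: A crossed product $D * A$ has $D$-basis $\{\bar a: a\in A\}$ with $\bar a_1\bar a_2=\tau(a_1,a_2)\overline{a_1a_2}$ ($\tau(a_1,a_2)\in D\setminus\{0\}$) and $\bar a d=\sigma_a(d)\bar a$ for automorphisms $\sigma_a$ of $D$. For $X\subseteq A$, $D * X$ is the set of elements whose support lies in $X$. $M$ is $D * C$-torsion if every element is annihilated by a nonzero element of $D * C$; $\mathrm{gk}$ is Gelfand–Kirillov dimension over $D$. Let $A^*=\mathrm{Hom}_{\mathbb Z}(A,\mathbb R)\cong\mathbb R^{\mathrm{rk}(A)}$. For $\phi\in A^*$ put $A(0,\phi)=\{a:\phi(a)\ge0\}$, $A(+,\phi)=\{a:\phi(a)>0\}$. For a finite generating set $\mathcal X$ of $M$, the trailing coefficient module is $TC_\phi(M)=\mathcal X(D * A(0,\phi))/\mathcal X(D * A(+,\phi))$, and $\Delta(M)=\{\phi\in A^*: TC_\phi(M)\neq0\}$ (independent of $\mathcal X$). A point $x$ of a subset $S\subseteq\mathbb R^n$ is regular if some neighborhood of $x$ in $S$ (intersection of $S$ with a ball centred at $x$) is an $m$-ball (intersection of a ball with an $m$-dimensional subspace) and no point of $S$ has this property for a larger $m$.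 $\Delta^*(M)$ is the Euclidean closure of the set of regular points of $\Delta(M)$; it is a closed rational polyhedron of dimension $\mathrm{gk}(M)$, and its carrier spaces are the linear spans of neighborhoods of its regular points. For a subspace $V\subseteq A^*$, $V^\circ=\{a\in A:\phi(a)=0\ \forall\phi\in V\}$. *)

theory Defs
  imports "HOL-Analysis.Analysis"
begin

text \<open>The free abelian group A of rank n is modelled as int^'n (additive notation);
 elements of the crossed product D*A are finitely supported functions A => D,
 f corresponding to the sum over a of (f a) abar.\<close>

definition fsupp :: "('a::ab_group_add \<Rightarrow> 'd::zero) \<Rightarrow> 'a set" where
  "fsupp f = {a. f a \<noteq> 0}"

definition CP :: "('a::ab_group_add \<Rightarrow> 'd::zero) set" where
  "CP = {f. finite (fsupp f)}"

definition CPon :: "'a::ab_group_add set \<Rightarrow> ('a \<Rightarrow> 'd::zero) set" where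
  "CPon X = {f \<in> CP. fsupp f \<subseteq> X}"

definition cp_one :: "'a::ab_group_add \<Rightarrow> 'd::{zero,one}" where
  "cp_one = (\<lambda>a. if a = 0 then 1 else 0)"

text \<open>Multiplication: (d abar)(e bbar) = d sigma_a(e) tau(a,b) (a+b)bar.\<close>
definition cp_mult :: "('a::ab_group_add \<Rightarrow> 'd::division_ring \<Rightarrow> 'd) \<Rightarrow> ('a \<Rightarrow> 'a \<Rightarrow> 'd)
    \<Rightarrow> ('a \<Rightarrow> 'd) \<Rightarrow> ('a \<Rightarrow> 'd) \<Rightarrow> ('a \<Rightarrow> 'd)" where
  "cp_mult \<sigma> \<tau> f g = (\<lambda>c. \<Sum>a\<in>fsupp f. f a * \<sigma> a (g (c - a)) * \<tau> a (c - a))"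

text \<open>Crossed product data (normalised so that 0bar is the identity): each sigma_a is a
 ring automorphism of D, tau takes nonzero values, and the associativity (cocycle)
 conditions hold.\<close>
definition crossed_product :: "('a::ab_group_add \<Rightarrow> 'd::division_ring \<Rightarrow> 'd) \<Rightarrow> ('a \<Rightarrow> 'a \<Rightarrow> 'd) \<Rightarrow> bool" where
  "crossed_product \<sigma> \<tau> \<longleftrightarrow>
     (\<forall>a. bij (\<sigma> a) \<and> (\<forall>x y. \<sigma> a (x + y) = \<sigma> a x + \<sigma> a y \<and> \<sigma> a (x * y) = \<sigma> a x * \<sigma> a y)
          \<and> \<sigma> a 1 = 1) \<and>
     (\<forall>a b. \<tau> a b \<noteq> 0) \<and>
     \<sigma> 0 = id \<and> (\<forall>a. \<tau> 0 a = 1 \<and> \<tau> a 0 = 1) \<and>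
     (\<forall>a b d. \<sigma> a (\<sigma> b d) * \<tau> a b = \<tau> a b * \<sigma> (a + b) d) \<and>
     (\<forall>a b c. \<tau> a b * \<tau> (a + b) c = \<sigma> a (\<tau> b c) * \<tau> a (b + c))"

text \<open>Right D*A-module structure on the abelian group 'm (the whole type is M).\<close>
definition right_module :: "('a::ab_group_add \<Rightarrow> 'd::division_ring \<Rightarrow> 'd) \<Rightarrow> ('a \<Rightarrow> 'a \<Rightarrow> 'd)
    \<Rightarrow> ('m::ab_group_add \<Rightarrow> ('a \<Rightarrow> 'd) \<Rightarrow> 'm) \<Rightarrow> bool" where
  "right_module \<sigma> \<tau> act \<longleftrightarrow>
     (\<forall>m m' f. f \<in> CP \<longrightarrow> act (m + m') f = act m f + act m' f) \<and>
     (\<forall>m f g. f \<in> CP \<longrightarrow> g \<in> CP \<longrightarrow> act m (\<lambda>a. f a + g a) = act m f + act m g) \<and>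
     (\<forall>m f g. f \<in> CP \<longrightarrow> g \<in> CP \<longrightarrow> act m (cp_mult \<sigma> \<tau> f g) = act (act m f) g) \<and>
     (\<forall>m. act m cp_one = m)"

definition XS :: "('m::ab_group_add \<Rightarrow> ('a \<Rightarrow> 'd) \<Rightarrow> 'm) \<Rightarrow> 'm set \<Rightarrow> ('a \<Rightarrow> 'd) set \<Rightarrow> 'm set" where
  "XS act X S = {(\<Sum>x\<in>X. act x (h x)) | h. \<forall>x\<in>X. h x \<in> S}"

definition generates :: "('m::ab_group_add \<Rightarrow> ('a::ab_group_add \<Rightarrow> 'd::zero) \<Rightarrow> 'm) \<Rightarrow> 'm set \<Rightarrow> bool" where
  "generates act X \<longleftrightarrow> XS act X CP = UNIV"

definition is_torsion :: "('m::ab_group_add \<Rightarrow> ('a::ab_group_add \<Rightarrow> 'd::zero) \<Rightarrow> 'm) \<Rightarrow> 'a set \<Rightarrow> bool" where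
  "is_torsion act C \<longleftrightarrow> (\<forall>m. \<exists>f \<in> CPon C. f \<noteq> (\<lambda>_. 0) \<and> act m f = 0)"

text \<open>Right D-vector space structure of M (restriction of scalars to D = D*{0}).\<close>
definition dsc :: "('m \<Rightarrow> ('a::ab_group_add \<Rightarrow> 'd::zero) \<Rightarrow> 'm) \<Rightarrow> 'm \<Rightarrow> 'd \<Rightarrow> 'm" where
  "dsc act m d = act m (\<lambda>a. if a = 0 then d else 0)"

definition rindep :: "('m::ab_group_add \<Rightarrow> ('a::ab_group_add \<Rightarrow> 'd::zero) \<Rightarrow> 'm) \<Rightarrow> 'm set \<Rightarrow> bool" where
  "rindep act Y \<longleftrightarrow> finite Y \<and>
     (\<forall>c. (\<Sum>y\<in>Y. dsc act y (c y)) = 0 \<longrightarrow> (\<forall>y\<in>Y. c y = 0))"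

definition rdim :: "('m::ab_group_add \<Rightarrow> ('a::ab_group_add \<Rightarrow> 'd::zero) \<Rightarrow> 'm) \<Rightarrow> 'm set \<Rightarrow> nat" where
  "rdim act W = Sup {card Y | Y. Y \<subseteq> W \<and> rindep act Y}"

definition ballA :: "nat \<Rightarrow> (int ^ 'n::finite) set" where
  "ballA k = {a. (\<Sum>i\<in>UNIV. \<bar>a $ i\<bar>) \<le> int k}"

definition gk :: "('m::ab_group_add \<Rightarrow> (int ^ 'n::finite \<Rightarrow> 'd::division_ring) \<Rightarrow> 'm) \<Rightarrow> 'm set \<Rightarrow> ereal" where
  "gk act X = limsup (\<lambda>k. ereal (ln (real (rdim act (XS act X (CPon (ballA k))))) / ln (real k)))"

text \<open>A^* = Hom(A,R) identified with real^'n.\<close>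
definition phi_app :: "real ^ 'n::finite \<Rightarrow> int ^ 'n \<Rightarrow> real" where
  "phi_app \<phi> a = (\<Sum>i\<in>UNIV. \<phi> $ i * real_of_int (a $ i))"

definition Delta :: "('m::ab_group_add \<Rightarrow> (int ^ 'n::finite \<Rightarrow> 'd::division_ring) \<Rightarrow> 'm) \<Rightarrow> 'm set \<Rightarrow> (real ^ 'n) set" where
  "Delta act X = {\<phi>. XS act X (CPon {a. phi_app \<phi> a \<ge> 0}) \<noteq> XS act X (CPon {a. phi_app \<phi> a > 0})}"

definition has_mball_nbhd :: "('a::euclidean_space) set \<Rightarrow> 'a \<Rightarrow> nat \<Rightarrow> bool" where
  "has_mball_nbhd S x m \<longleftrightarrow> x \<in> S \<and> (\<exists>r>0. \<exists>c s U. subspace U \<and> dim U = m \<and> S \<inter> ball x r = ball c s \<inter> U)"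

definition regular_point :: "('a::euclidean_space) set \<Rightarrow> 'a \<Rightarrow> bool" where
  "regular_point S x \<longleftrightarrow> (\<exists>m. has_mball_nbhd S x m \<and> (\<forall>y\<in>S. \<forall>m'>m. \<not> has_mball_nbhd S y m'))"

definition Delta_star :: "('m::ab_group_add \<Rightarrow> (int ^ 'n::finite \<Rightarrow> 'd::division_ring) \<Rightarrow> 'm) \<Rightarrow> 'm set \<Rightarrow> (real ^ 'n) set" where
  "Delta_star act X = closure {x. regular_point (Delta act X) x}"

definition carrier_space :: "('a::euclidean_space) set \<Rightarrow> 'a set \<Rightarrow> bool" where
  "carrier_space S V \<longleftrightarrow> (\<exists>x. regular_point S x \<and>
      (\<exists>r>0. \<exists>c s U. subspace U \<and> S \<inter> ball x r = ball c s \<inter> U \<and> V = span (S \<inter> ball x r)))"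

definition Vcirc :: "(real ^ 'n::finite) set \<Rightarrow> (int ^ 'n) set" where
  "Vcirc V = {a. \<forall>\<phi>\<in>V. phi_app \<phi> a = 0}"

end

theory Submission
  imports Defs
begin

text \<open>If \<open>\<phi>(c) \<noteq> 0\<close>, then \<open>\<phi>\<close> separates the support of any nonzero \<open>g \<in> D * C\<close>, so \<open>g\<close> has
  a unique \<open>\<phi>\<close>-minimal term \<open>g\<^sub>b b\<close>. Multiplying \<open>g\<close> on the right by the inverse of that
  term gives \<open>1 - u\<close> with \<open>u \<in> D * A(+,\<phi>)\<close>; if \<open>g\<close> annihilates \<open>m\<close> then \<open>m = m u\<close>.
  Hence every element of \<open>\<X>(D * A(0,\<phi>))\<close> already lies in \<open>\<X>(D * A(+,\<phi>))\<close>, i.e.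
  \<open>TC\<^sub>\<phi>(M) = 0\<close>. So \<open>\<Delta>(M)\<close> lies in the closed hyperplane \<open>c\<^sup>\<perp>\<close>, and so do \<open>\<Delta>\<^sup>*(M)\<close> and
  each of its carrier spaces \<open>V\<close>; thus \<open>c \<in> V\<degree>\<close>.\<close>

lemma phi_app_diff: "phi_app \<phi> (a - b) = phi_app \<phi> a - phi_app \<phi> b"
  unfolding phi_app_def by (simp add: algebra_simps sum_subtractf)

lemma phi_app_scaleR_int: "phi_app \<phi> (k *s c) = of_int k * phi_app \<phi> c"
  unfolding phi_app_def by (simp add: sum_distrib_left algebra_simps)

lemma subspace_phi_app_kernel: "subspace {\<phi>. phi_app \<phi> c = 0}"
  unfolding subspace_def phi_app_def
  by (simp add: sum.distrib distrib_right mult.assoc sum_distrib_left[symmetric])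

lemma closed_phi_app_kernel: "closed {\<phi>. phi_app \<phi> c = 0}"
  unfolding phi_app_def by (intro closed_Collect_eq continuous_intros)

definition cp_monom :: "'a::ab_group_add \<Rightarrow> 'd::zero \<Rightarrow> 'a \<Rightarrow> 'd" where
  "cp_monom a d = (\<lambda>q. if q = a then d else 0)"

lemma CP_zero: "(\<lambda>_. 0) \<in> CP"
  unfolding CP_def fsupp_def by simp

lemma CP_uminus: "(f::'a::ab_group_add \<Rightarrow> 'd::group_add) \<in> CP \<Longrightarrow> (\<lambda>a. - f a) \<in> CP"
  unfolding CP_def fsupp_def by simp

lemma CP_cp_monom: "cp_monom a d \<in> CP"
  unfolding CP_def fsupp_def cp_monom_def
  by (rule CollectI, rule finite_subset[of _ "{a}"]) auto

lemma CP_cp_one: "cp_one \<in> CP"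
  using CP_cp_monom[of 0 1] by (simp add: cp_monom_def cp_one_def)

lemma crossed_product_sigma_zero:
  assumes "crossed_product \<sigma> \<tau>"
  shows "\<sigma> a 0 = 0"
proof -
  have "\<sigma> a (0 + 0) = \<sigma> a 0 + \<sigma> a 0"
    using assms unfolding crossed_product_def by blast
  then show ?thesis by simp
qed

lemma fsupp_cp_mult:
  assumes "crossed_product \<sigma> \<tau>" and "p \<in> fsupp (cp_mult \<sigma> \<tau> f g)"
  obtains a where "a \<in> fsupp f" and "p - a \<in> fsupp g"
proof -
  have "cp_mult \<sigma> \<tau> f g p \<noteq> 0"
    using assms(2) by (simp add: fsupp_def)
  then have "\<exists>a\<in>fsupp f. g (p - a) \<noteq> 0"
    unfolding cp_mult_def using crossed_product_sigma_zero[OF assms(1)]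
    by (metis (no_types, lifting) mult_zero_left mult_zero_right sum.neutral)
  then show ?thesis using that by (auto simp: fsupp_def)
qed

lemma cp_mult_CPon_pos:
  assumes "crossed_product \<sigma> \<tau>"
    and "f \<in> CPon {a. phi_app \<phi> a > 0}" and "g \<in> CPon {a. phi_app \<phi> a \<ge> 0}"
  shows "cp_mult \<sigma> \<tau> f g \<in> CPon {a. phi_app \<phi> a > 0}"
proof -
  have fin: "finite (fsupp f \<times> fsupp g)"
    using assms by (auto simp: CPon_def CP_def)
  have "fsupp (cp_mult \<sigma> \<tau> f g) \<subseteq> (\<lambda>(a, b). a + b) ` (fsupp f \<times> fsupp g)"
  proof
    fix p assume "p \<in> fsupp (cp_mult \<sigma> \<tau> f g)"
    then obtain a where "a \<in> fsupp f" "p - a \<in> fsupp g" by (rule fsupp_cp_mult[OF assms(1)])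
    then show "p \<in> (\<lambda>(a, b). a + b) ` (fsupp f \<times> fsupp g)"
      by (auto intro!: image_eqI[where x="(a, p - a)"])
  qed
  moreover have "fsupp (cp_mult \<sigma> \<tau> f g) \<subseteq> {a. phi_app \<phi> a > 0}"
  proof
    fix p assume "p \<in> fsupp (cp_mult \<sigma> \<tau> f g)"
    then obtain a where "a \<in> fsupp f" "p - a \<in> fsupp g" by (rule fsupp_cp_mult[OF assms(1)])
    then have "phi_app \<phi> a > 0" "phi_app \<phi> (p - a) \<ge> 0"
      using assms by (auto simp: CPon_def)
    then show "p \<in> {a. phi_app \<phi> a > 0}" by (simp add: phi_app_diff)
  qed
  ultimately show ?thesis
    using fin by (auto simp: CPon_def CP_def intro: finite_subset)
qed

lemma cp_mult_cp_monom_right: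
  assumes "crossed_product \<sigma> \<tau>" and "finite (fsupp f)"
  shows "cp_mult \<sigma> \<tau> f (cp_monom a d) p = f (p - a) * \<sigma> (p - a) d * \<tau> (p - a) a"
proof -
  have "cp_mult \<sigma> \<tau> f (cp_monom a d) p
      = (\<Sum>b\<in>fsupp f. if b = p - a then f b * \<sigma> b d * \<tau> b (p - b) else 0)"
    unfolding cp_mult_def cp_monom_def
    by (rule sum.cong) (auto simp: crossed_product_sigma_zero[OF assms(1)] algebra_simps)
  also have "\<dots> = f (p - a) * \<sigma> (p - a) d * \<tau> (p - a) a"
    using assms(2) by (auto simp: sum.delta' fsupp_def)
  finally show ?thesis .
qed

lemma right_module_act_add:
  "right_module \<sigma> \<tau> act \<Longrightarrow> f \<in> CP \<Longrightarrow> g \<in> CP \<Longrightarrow> act m (\<lambda>a. f a + g a) = act m f + act m g"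
  unfolding right_module_def by blast

lemma right_module_act_cp_mult:
  "right_module \<sigma> \<tau> act \<Longrightarrow> f \<in> CP \<Longrightarrow> g \<in> CP \<Longrightarrow> act m (cp_mult \<sigma> \<tau> f g) = act (act m f) g"
  unfolding right_module_def by blast

lemma right_module_act_cp_one: "right_module \<sigma> \<tau> act \<Longrightarrow> act m cp_one = m"
  unfolding right_module_def by blast

lemma right_module_act_zero:
  assumes "right_module \<sigma> \<tau> act"
  shows "act m (\<lambda>_. 0) = 0"
proof -
  have "act m (\<lambda>a. 0 + 0) = act m (\<lambda>_. 0) + act m (\<lambda>_. 0)"
    using assms CP_zero unfolding right_module_def by blast
  then show ?thesis by simp
qed

lemma right_module_zero_act:
  assumes "right_module \<sigma> \<tau> act" and "f \<in> CP"
  shows "act 0 f = 0"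
proof -
  have "act (0 + 0) f = act 0 f + act 0 f"
    using assms unfolding right_module_def by blast
  then show ?thesis by simp
qed

lemma right_module_act_uminus:
  assumes "right_module \<sigma> \<tau> act" and "f \<in> CP"
  shows "act m (\<lambda>a. - f a) = - act m f"
proof -
  have "act m (\<lambda>a. f a + - f a) = act m f + act m (\<lambda>a. - f a)"
    using assms CP_uminus unfolding right_module_def by blast
  then show ?thesis
    using right_module_act_zero[OF assms(1)] by (simp add: eq_neg_iff_add_eq_0 add.commute)
qed

lemma finite_inj_on_strict_min:
  fixes w :: "'a \<Rightarrow> 'b::linorder"
  assumes "finite F" and "F \<noteq> {}" and "inj_on w F"
  obtains b where "b \<in> F" and "\<And>a. a \<in> F \<Longrightarrow> a \<noteq> b \<Longrightarrow> w b < w a"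
proof -
  have "Min (w ` F) \<in> w ` F" using assms(1,2) by simp
  then obtain b where b: "b \<in> F" "w b = Min (w ` F)" by auto
  have "w b < w a" if "a \<in> F" "a \<noteq> b" for a
    using that b assms(1,3) by (metis Min_le finite_imageI image_eqI inj_on_eq_iff order_le_neq_trans)
  then show ?thesis using that b(1) by blast
qed

lemma annihilated_fixed_by_pos:
  fixes \<sigma> :: "int ^ 'n::finite \<Rightarrow> 'd::division_ring \<Rightarrow> 'd"
    and act :: "'m::ab_group_add \<Rightarrow> (int ^ 'n \<Rightarrow> 'd) \<Rightarrow> 'm"
  assumes cp: "crossed_product \<sigma> \<tau>" and rm: "right_module \<sigma> \<tau> act"
    and g: "g \<in> CP" "g \<noteq> (\<lambda>_. 0)" "act m g = 0"
    and inj: "inj_on (phi_app \<phi>) (fsupp g)"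
  obtains w where "w \<in> CPon {a. phi_app \<phi> a > 0}" and "act m w = m"
proof -
  have fin: "finite (fsupp g)" using g(1) by (simp add: CP_def)
  moreover have "fsupp g \<noteq> {}" using g(2) by (auto simp: fsupp_def)
  ultimately obtain b where b: "b \<in> fsupp g"
    and bmin: "\<And>a. a \<in> fsupp g \<Longrightarrow> a \<noteq> b \<Longrightarrow> phi_app \<phi> b < phi_app \<phi> a"
    using finite_inj_on_strict_min inj by blast
  have "bij (\<sigma> b)" using cp unfolding crossed_product_def by blast
  then obtain d where d: "\<sigma> b d = inverse (g b) * inverse (\<tau> b (- b))"
    by (metis bij_is_surj surjD)
  have gb: "g b \<noteq> 0" using b by (simp add: fsupp_def)
  have "\<tau> b (- b) \<noteq> 0" using cp unfolding crossed_product_def by blast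
  define e where "e = cp_monom (- b) d"
  define u where "u = (\<lambda>p. cp_mult \<sigma> \<tau> g e p - cp_one p)"
  have ge: "cp_mult \<sigma> \<tau> g e p = g (p + b) * \<sigma> (p + b) d * \<tau> (p + b) (- b)" for p
    unfolding e_def using cp_mult_cp_monom_right[OF cp fin] by simp
  have u0: "u 0 = 0"
    using d gb \<open>\<tau> b (- b) \<noteq> 0\<close> by (simp add: u_def ge cp_one_def mult.assoc)
  have u_nz: "p \<noteq> 0" if "p \<in> fsupp u" for p
    using that u0 by (auto simp: fsupp_def)
  have u_supp: "p + b \<in> fsupp g" if "p \<in> fsupp u" for p
    using that u_nz[OF that] by (simp add: fsupp_def u_def ge cp_one_def)
  have "fsupp u \<subseteq> (\<lambda>a. a - b) ` fsupp g"
    using u_supp by (auto intro!: image_eqI[where x="_ + b"])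
  then have uCP: "u \<in> CP" unfolding CP_def using fin by (blast intro: finite_subset)
  have u_pos: "phi_app \<phi> p > 0" if "p \<in> fsupp u" for p
    using bmin[of "p + b"] u_supp[OF that] u_nz[OF that] phi_app_diff[of \<phi> "p + b" b] by simp
  have "0 = act (act m g) e"
    using g(3) right_module_zero_act[OF rm CP_cp_monom] by (simp add: e_def)
  also have "\<dots> = act m (\<lambda>p. cp_one p + u p)"
    using right_module_act_cp_mult[OF rm g(1) CP_cp_monom] by (simp add: e_def u_def)
  also have "\<dots> = m + act m u"
    using right_module_act_add[OF rm CP_cp_one uCP] right_module_act_cp_one[OF rm] by simp
  finally have "act m (\<lambda>p. - u p) = m"
    using right_module_act_uminus[OF rm uCP] by (metis minus_minus minus_unique)
  moreover have "(\<lambda>p. - u p) \<in> CPon {a. phi_app \<phi> a > 0}"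
    using u_pos CP_uminus[OF uCP] by (auto simp: CPon_def fsupp_def)
  ultimately show ?thesis using that by blast
qed

lemma XS_mono: "S \<subseteq> T \<Longrightarrow> XS act X S \<subseteq> XS act X T"
  unfolding XS_def by blast

lemma XS_CPon_nonneg_eq_pos:
  assumes cp: "crossed_product \<sigma> \<tau>" and rm: "right_module \<sigma> \<tau> act"
    and fixed: "\<And>m. \<exists>w\<in>CPon {a. phi_app \<phi> a > 0}. act m w = m"
  shows "XS act X (CPon {a. phi_app \<phi> a \<ge> 0}) = XS act X (CPon {a. phi_app \<phi> a > 0})"
proof
  obtain W where W: "\<And>m. W m \<in> CPon {a. phi_app \<phi> a > 0}" "\<And>m. act m (W m) = m"
    using fixed by metis
  show "XS act X (CPon {a. phi_app \<phi> a \<ge> 0}) \<subseteq> XS act X (CPon {a. phi_app \<phi> a > 0})"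
  proof
    fix y assume "y \<in> XS act X (CPon {a. phi_app \<phi> a \<ge> 0})"
    then obtain h where y: "y = (\<Sum>x\<in>X. act x (h x))"
      and h: "\<forall>x\<in>X. h x \<in> CPon {a. phi_app \<phi> a \<ge> 0}"
      unfolding XS_def by blast
    have "act x (h x) = act x (cp_mult \<sigma> \<tau> (W x) (h x))" if "x \<in> X" for x
      using right_module_act_cp_mult[OF rm, of "W x" "h x" x] W h that by (simp add: CPon_def)
    then have "y = (\<Sum>x\<in>X. act x (cp_mult \<sigma> \<tau> (W x) (h x)))"
      using y by simp
    moreover have "\<forall>x\<in>X. cp_mult \<sigma> \<tau> (W x) (h x) \<in> CPon {a. phi_app \<phi> a > 0}"
      using cp_mult_CPon_pos[OF cp W(1)] h by blast
    ultimately show "y \<in> XS act X (CPon {a. phi_app \<phi> a > 0})"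
      unfolding XS_def by (intro CollectI exI[where x="\<lambda>x. cp_mult \<sigma> \<tau> (W x) (h x)"]) simp
  qed
  show "XS act X (CPon {a. phi_app \<phi> a > 0}) \<subseteq> XS act X (CPon {a. phi_app \<phi> a \<ge> 0})"
    by (rule XS_mono) (auto simp: CPon_def)
qed

lemma Delta_subset_kernel_if_torsion:
  fixes \<sigma> :: "int ^ 'n::finite \<Rightarrow> 'd::division_ring \<Rightarrow> 'd"
    and act :: "'m::ab_group_add \<Rightarrow> (int ^ 'n \<Rightarrow> 'd) \<Rightarrow> 'm"
  assumes cp: "crossed_product \<sigma> \<tau>" and rm: "right_module \<sigma> \<tau> act"
    and torsion: "is_torsion act (range (\<lambda>k::int. k *s c))"
  shows "Delta act X \<subseteq> {\<phi>. phi_app \<phi> c = 0}"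
proof
  fix \<phi> assume D: "\<phi> \<in> Delta act X"
  show "\<phi> \<in> {\<phi>. phi_app \<phi> c = 0}"
  proof (rule ccontr)
    assume "\<phi> \<notin> {\<phi>. phi_app \<phi> c = 0}"
    then have inj: "inj_on (phi_app \<phi>) (range (\<lambda>k::int. k *s c))"
      by (auto intro!: inj_onI simp: phi_app_scaleR_int)
    have "\<exists>w\<in>CPon {a. phi_app \<phi> a > 0}. act m w = m" for m
    proof -
      obtain g where g: "g \<in> CPon (range (\<lambda>k::int. k *s c))" "g \<noteq> (\<lambda>_. 0)" "act m g = 0"
        using torsion unfolding is_torsion_def by blast
      then have "g \<in> CP" "inj_on (phi_app \<phi>) (fsupp g)"
        using inj_on_subset[OF inj] by (auto simp: CPon_def)
      then obtain w where "w \<in> CPon {a. phi_app \<phi> a > 0}" "act m w = m"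
        using annihilated_fixed_by_pos[OF cp rm _ g(2,3)] by blast
      then show ?thesis by blast
    qed
    then have "XS act X (CPon {a. phi_app \<phi> a \<ge> 0}) = XS act X (CPon {a. phi_app \<phi> a > 0})"
      by (rule XS_CPon_nonneg_eq_pos[OF cp rm])
    with D show False by (simp add: Delta_def)
  qed
qed

lemma Delta_star_subset:
  assumes "Delta act X \<subseteq> H" and "closed H"
  shows "Delta_star act X \<subseteq> H"
  unfolding Delta_star_def using assms
  by (intro closure_minimal) (auto simp: regular_point_def has_mball_nbhd_def)

lemma carrier_space_subset:
  assumes "carrier_space S V" and "S \<subseteq> H" and "subspace H"
  shows "V \<subseteq> H"
  using assms unfolding carrier_space_def by (metis Int_lower1 span_minimal subset_trans)

theorem lemma4p6:
  fixes \<sigma> :: "int ^ 'n::finite \<Rightarrow> 'd::division_ring \<Rightarrow> 'd"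
    and \<tau> :: "int ^ 'n \<Rightarrow> int ^ 'n \<Rightarrow> 'd"
    and act :: "'m::ab_group_add \<Rightarrow> (int ^ 'n \<Rightarrow> 'd) \<Rightarrow> 'm"
    and X :: "'m set"
    and c :: "int ^ 'n"
    and V :: "(real ^ 'n) set"
  assumes "crossed_product \<sigma> \<tau>"
    and "right_module \<sigma> \<tau> act"
    and "\<exists>m::'m. m \<noteq> 0"
    and "finite X" and "generates act X"
    and "gk act X \<ge> 1"
    and "c \<noteq> 0"
    and "is_torsion act (range (\<lambda>k::int. k *s c))"
    and "carrier_space (Delta_star act X) V"
  shows "Vcirc V \<inter> range (\<lambda>k::int. k *s c) \<noteq> {0}"
proof -
  have "Delta act X \<subseteq> {\<phi>. phi_app \<phi> c = 0}"
    using Delta_subset_kernel_if_torsion assms(1,2,8) .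
  then have "Delta_star act X \<subseteq> {\<phi>. phi_app \<phi> c = 0}"
    using Delta_star_subset closed_phi_app_kernel by blast
  then have "V \<subseteq> {\<phi>. phi_app \<phi> c = 0}"
    using carrier_space_subset assms(9) subspace_phi_app_kernel by blast
  then have "c \<in> Vcirc V" by (auto simp: Vcirc_def)
  moreover have "c \<in> range (\<lambda>k::int. k *s c)" by (rule image_eqI[where x=1]) simp_all
  ultimately show ?thesis using assms(7) by blast
qed

end
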